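(* Let $\mathcal{W}\subseteq\{x\in\mathbb{R}^d:\|x\|_2\le1\}$ be closed convex with $0\in\mathcal{W}$, let $f_t(x)=\langle \mathbf f_t,x\rangle$ for vectors $\mathbf f_1,\dots,\mathbf f_T\in\mathbb{R}^d$, set $\mathbf f_0=0$ and $\mathrm{EGV}^f_{T,2}=\sum_{t=0}^{T-1}\|\mathbf f_{t+1}-\mathbf f_t\|_2^2>0$. Run the online mirror prox updates with $L=1$ and $\eta=\sqrt{1/(2\mathrm{EGV}^f_{T,2})}$, i.e. $x_0=z_0=0$ and $$x_t=\arg\min_{x\in\mathcal{W}}\{\langle x,\mathbf f_{t-1}\rangle+\tfrac1{2\eta}\|x-z_{t-1}\|_2^2\},\quad z_t=\arg\min_{x\in\mathcal{W}}\{\langle x,\mathbf f_t\rangle+\tfrac1{2\eta}\|x-z_{t-1}\|_2^2\}.$$ Then $\sum_{t=1}^T\langle\mathbf f_t,x_t\rangle-\min_{x\in\mathcal{W}}\sum_{t=1}^T\langle\mathbf f_t,x\rangle\le\sqrt{2\,\mathrm{EGV}^f_{T,2}}$.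
   Context: $x_t$ is the decision played at round $t$, before $\mathbf f_t$ is revealed. *)

theory Defs
  imports "HOL-Analysis.Analysis"
begin

definition lossvec :: "(nat \<Rightarrow> 'a::euclidean_space) \<Rightarrow> nat \<Rightarrow> 'a" where
  "lossvec f t = (if t = 0 then 0 else f t)"

definition EGV2 :: "(nat \<Rightarrow> 'a::euclidean_space) \<Rightarrow> nat \<Rightarrow> real" where
  "EGV2 f T = (\<Sum>t<T. (norm (lossvec f (Suc t) - lossvec f t))^2)"

definition is_argmin_on :: "'a set \<Rightarrow> ('a \<Rightarrow> real) \<Rightarrow> 'a \<Rightarrow> bool" where
  "is_argmin_on W g y \<longleftrightarrow> y \<in> W \<and> (\<forall>x\<in>W. g y \<le> g x)"

end

theory Submission
  imports Defs
begin

(* For each comparator u in W, one round t of the method satisfies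
     <f_t, x_t - u> <= (|u - z_{t-1}|^2 - |u - z_t|^2) / (2 eta)
                       + eta/2 |f_t - f_{t-1}|^2,
   obtained from the first-order optimality (variational inequality) of the
   two proximal steps producing z_t and x_t, the three-point identity for the
   Euclidean distance, Cauchy-Schwarz and Young's inequality.  Summing
   telescopes the distance terms; since z_0 = 0 and W lies in the unit ball,
   the regret against u is at most 1/(2 eta) + eta/2 * EGV, and the choice
   eta = sqrt (1 / (2 EGV)) makes this (3/4) sqrt (2 EGV). *)

text \<open>A real function of the form s L + s^2 c that is nonnegative for all small
  s > 0 must have nonnegative slope L; this turns minimality along a segment
  into a first-order condition.\<close>
lemma nonneg_slope_of_nonneg_near_zero:
  fixes L c :: real
  assumes nonneg: "\<And>s. 0 < s \<Longrightarrow> s \<le> 1 \<Longrightarrow> 0 \<le> s * L + s\<^sup>2 * c"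
  shows "0 \<le> L"
proof (rule ccontr)
  assume "\<not> 0 \<le> L"
  hence L: "L < 0" by simp
  have divided: "0 \<le> L + s * c" if "0 < s" "s \<le> 1" for s
  proof -
    have "0 \<le> s * (L + s * c)"
      using nonneg[OF that] by (simp add: algebra_simps power2_eq_square)
    thus ?thesis using that by (simp add: zero_le_mult_iff)
  qed
  show False
  proof (cases "c \<le> 0")
    case True
    with divided[of 1] L show False by simp
  next
    case False
    define s where "s = min 1 (-L / (2 * c))"
    have s: "0 < s" "s \<le> 1" using False L by (auto simp: s_def divide_neg_pos)
    have "s * c \<le> (-L / (2 * c)) * c" using False by (intro mult_right_mono) (auto simp: s_def)
    also have "\<dots> = -L / 2" using False by simp
    finally show False using divided[OF s] L by linarith
  qed
qed

lemma proximal_variational_inequality: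
  fixes W :: "'a::real_inner set"
  assumes "convex W"
    and argmin: "is_argmin_on W (\<lambda>w. inner w g + c * (norm (w - z))\<^sup>2) y"
    and "w \<in> W"
  shows "0 \<le> inner (w - y) g + 2 * c * inner (w - y) (y - z)"
proof -
  have yW: "y \<in> W"
    and minimal: "\<And>v. v \<in> W \<Longrightarrow> inner y g + c * (norm (y - z))\<^sup>2 \<le> inner v g + c * (norm (v - z))\<^sup>2"
    using argmin unfolding is_argmin_on_def by auto
  define d where "d = w - y"
  show ?thesis unfolding d_def[symmetric]
  proof (rule nonneg_slope_of_nonneg_near_zero[where c = "c * (norm d)\<^sup>2"])
    fix s :: real
    assume s: "0 < s" "s \<le> 1"
    have "(1 - s) *\<^sub>R y + s *\<^sub>R w \<in> W"
      using \<open>convex W\<close> yW \<open>w \<in> W\<close> s by (intro convexD) auto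
    moreover have "(1 - s) *\<^sub>R y + s *\<^sub>R w = y + s *\<^sub>R d" by (simp add: d_def algebra_simps)
    ultimately have "inner y g + c * (norm (y - z))\<^sup>2
        \<le> inner (y + s *\<^sub>R d) g + c * (norm (y + s *\<^sub>R d - z))\<^sup>2"
      using minimal by simp
    moreover have "(norm (y + s *\<^sub>R d - z))\<^sup>2
        = (norm (y - z))\<^sup>2 + 2 * s * inner d (y - z) + s\<^sup>2 * (norm d)\<^sup>2"
      unfolding power2_norm_eq_inner by (simp add: algebra_simps inner_commute power2_eq_square)
    ultimately show "0 \<le> s * (inner d g + 2 * c * inner d (y - z)) + s\<^sup>2 * (c * (norm d)\<^sup>2)"
      by (simp add: inner_add_left algebra_simps)
  qed
qed

lemma three_point_identity:
  fixes u b a :: "'a::real_inner"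
  shows "inner (u - b) (b - a) = ((norm (u - a))\<^sup>2 - (norm (u - b))\<^sup>2 - (norm (b - a))\<^sup>2) / 2"
  by (simp add: power2_norm_eq_inner algebra_simps inner_commute)

lemma young_weighted:
  fixes a b \<eta> :: real
  assumes "\<eta> > 0"
  shows "a * b \<le> \<eta> / 2 * a\<^sup>2 + b\<^sup>2 / (2 * \<eta>)"
proof -
  have "0 \<le> (\<eta> * a - b)\<^sup>2 / (2 * \<eta>)" using assms by simp
  also have "\<dots> = \<eta> / 2 * a\<^sup>2 + b\<^sup>2 / (2 * \<eta>) - a * b"
    using assms by (simp add: field_simps power2_eq_square)
  finally show ?thesis by simp
qed

text \<open>Here z' is the prox step from z with loss q
  and x' the prox step from z with the predicted loss p; the two hypotheses
  are their variational inequalities, tested at u and at z' respectively.\<close>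
lemma mirror_prox_round:
  fixes u z z' x' p q :: "'a::real_inner" and \<eta> :: real
  assumes "\<eta> > 0"
    and z_opt: "0 \<le> inner (u - z') q + inner (u - z') (z' - z) / \<eta>"
    and x_opt: "0 \<le> inner (z' - x') p + inner (z' - x') (x' - z) / \<eta>"
  shows "inner q (x' - u) \<le> ((norm (u - z))\<^sup>2 - (norm (u - z'))\<^sup>2) / (2 * \<eta>) + \<eta> / 2 * (norm (q - p))\<^sup>2"
proof -
  have split: "inner q (x' - u) = inner (u - z') (-q) + inner (z' - x') (-p) + inner (q - p) (x' - z')"
    by (simp add: algebra_simps inner_commute)
  have z_bound: "inner (u - z') (-q) \<le> ((norm (u - z))\<^sup>2 - (norm (u - z'))\<^sup>2 - (norm (z' - z))\<^sup>2) / (2 * \<eta>)"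
    using z_opt \<open>\<eta> > 0\<close> by (simp add: three_point_identity inner_minus_right field_simps)
  have x_bound: "inner (z' - x') (-p) \<le> ((norm (z' - z))\<^sup>2 - (norm (z' - x'))\<^sup>2 - (norm (x' - z))\<^sup>2) / (2 * \<eta>)"
    using x_opt \<open>\<eta> > 0\<close> by (simp add: three_point_identity inner_minus_right field_simps)
  have "inner (q - p) (x' - z') \<le> norm (q - p) * norm (x' - z')"
    by (rule norm_cauchy_schwarz)
  also have "\<dots> \<le> \<eta> / 2 * (norm (q - p))\<^sup>2 + (norm (z' - x'))\<^sup>2 / (2 * \<eta>)"
    using young_weighted[OF \<open>\<eta> > 0\<close>] by (simp add: norm_minus_commute)
  finally have cross_bound: "inner (q - p) (x' - z') \<le> \<eta> / 2 * (norm (q - p))\<^sup>2 + (norm (z' - x'))\<^sup>2 / (2 * \<eta>)" .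
  have "0 \<le> (norm (x' - z))\<^sup>2 / (2 * \<eta>)" using \<open>\<eta> > 0\<close> by simp
  with split z_bound x_bound cross_bound show ?thesis
    by (simp add: diff_divide_distrib add_divide_distrib)
qed

lemma mirror_prox_regret:
  fixes W :: "'a::real_inner set" and g x z :: "nat \<Rightarrow> 'a"
  assumes "convex W" "\<eta> > 0" "u \<in> W"
    and x_step: "\<And>t. 1 \<le> t \<Longrightarrow> t \<le> n \<Longrightarrow>
           is_argmin_on W (\<lambda>w. inner w (g (t - 1)) + 1 / (2 * \<eta>) * (norm (w - z (t - 1)))\<^sup>2) (x t)"
    and z_step: "\<And>t. 1 \<le> t \<Longrightarrow> t \<le> n \<Longrightarrow>
           is_argmin_on W (\<lambda>w. inner w (g t) + 1 / (2 * \<eta>) * (norm (w - z (t - 1)))\<^sup>2) (z t)"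
  shows "(\<Sum>t=1..n. inner (g t) (x t - u))
    \<le> ((norm (u - z 0))\<^sup>2 - (norm (u - z n))\<^sup>2) / (2 * \<eta>) + \<eta> / 2 * (\<Sum>t<n. (norm (g (Suc t) - g t))\<^sup>2)"
proof -
  have "(\<Sum>t=1..m. inner (g t) (x t - u))
      \<le> ((norm (u - z 0))\<^sup>2 - (norm (u - z m))\<^sup>2) / (2 * \<eta>) + \<eta> / 2 * (\<Sum>t<m. (norm (g (Suc t) - g t))\<^sup>2)"
    if "m \<le> n" for m
    using that
  proof (induction m)
    case 0
    show ?case by simp
  next
    case (Suc m)
    have z_in: "z (Suc m) \<in> W" using z_step[of "Suc m"] Suc.prems by (simp add: is_argmin_on_def)
    have "0 \<le> inner (u - z (Suc m)) (g (Suc m)) + inner (u - z (Suc m)) (z (Suc m) - z m) / \<eta>"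
      using proximal_variational_inequality[OF \<open>convex W\<close> z_step[of "Suc m"] \<open>u \<in> W\<close>] Suc.prems by simp
    moreover have "0 \<le> inner (z (Suc m) - x (Suc m)) (g m) + inner (z (Suc m) - x (Suc m)) (x (Suc m) - z m) / \<eta>"
      using proximal_variational_inequality[OF \<open>convex W\<close> x_step[of "Suc m"] z_in] Suc.prems by simp
    ultimately have "inner (g (Suc m)) (x (Suc m) - u)
        \<le> ((norm (u - z m))\<^sup>2 - (norm (u - z (Suc m)))\<^sup>2) / (2 * \<eta>) + \<eta> / 2 * (norm (g (Suc m) - g m))\<^sup>2"
      by (rule mirror_prox_round[OF \<open>\<eta> > 0\<close>])
    with Suc.IH Suc.prems show ?case
      by (simp add: diff_divide_distrib distrib_left)
  qed
  thus ?thesis by simp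
qed

lemma tuned_step_size:
  fixes E \<eta> :: real
  assumes "E > 0" and "\<eta> = sqrt (1 / (2 * E))"
  shows "1 / (2 * \<eta>) + \<eta> / 2 * E = 3 / 4 * sqrt (2 * E)"
proof -
  define s where "s = sqrt (2 * E)"
  have "s > 0" using assms(1) by (simp add: s_def)
  have E: "E = s\<^sup>2 / 2" using assms(1) by (simp add: s_def)
  have "\<eta> = 1 / s" using assms(2) by (simp add: s_def real_sqrt_divide)
  with \<open>s > 0\<close> show ?thesis unfolding s_def[symmetric] E by (simp add: power2_eq_square)
qed

theorem mainTheorem5:
  fixes W :: "'a::euclidean_space set"
    and f :: "nat \<Rightarrow> 'a" and x z :: "nat \<Rightarrow> 'a" and T :: nat and \<eta> :: real
  assumes "closed W" and "convex W" and "0 \<in> W"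
    and "W \<subseteq> cball 0 1"
    and "EGV2 f T > 0"
    and "\<eta> = sqrt (1 / (2 * EGV2 f T))"
    and "x 0 = 0" and "z 0 = 0"
    and "\<And>t. 1 \<le> t \<Longrightarrow> t \<le> T \<Longrightarrow>
           is_argmin_on W (\<lambda>w. inner w (lossvec f (t - 1)) + 1 / (2 * \<eta>) * (norm (w - z (t - 1)))^2) (x t)"
    and "\<And>t. 1 \<le> t \<Longrightarrow> t \<le> T \<Longrightarrow>
           is_argmin_on W (\<lambda>w. inner w (lossvec f t) + 1 / (2 * \<eta>) * (norm (w - z (t - 1)))^2) (z t)"
  shows "(\<Sum>t=1..T. inner (f t) (x t)) - (INF u\<in>W. \<Sum>t=1..T. inner (f t) u) \<le> sqrt (2 * EGV2 f T)"
proof -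
  have "\<eta> > 0" using assms(5,6) by simp
  have regret_u: "(\<Sum>t=1..T. inner (f t) (x t)) - (\<Sum>t=1..T. inner (f t) u) \<le> sqrt (2 * EGV2 f T)"
    if "u \<in> W" for u
  proof -
    have "norm u \<le> 1" using that assms(4) by auto
    hence "(norm (u - z 0))\<^sup>2 \<le> 1" using assms(8) by (simp add: power_le_one)
    hence diameter: "(norm (u - z 0))\<^sup>2 - (norm (u - z T))\<^sup>2 \<le> 1"
      using zero_le_power2[of "norm (u - z T)"] by linarith
    have "(\<Sum>t=1..T. inner (f t) (x t)) - (\<Sum>t=1..T. inner (f t) u) = (\<Sum>t=1..T. inner (lossvec f t) (x t - u))"
      by (simp add: lossvec_def inner_diff_right sum_subtractf)
    also have "\<dots> \<le> ((norm (u - z 0))\<^sup>2 - (norm (u - z T))\<^sup>2) / (2 * \<eta>) + \<eta> / 2 * EGV2 f T"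
      using mirror_prox_regret[where g = "lossvec f", OF assms(2) \<open>\<eta> > 0\<close> that assms(9,10)] by (simp add: EGV2_def)
    also have "\<dots> \<le> 1 / (2 * \<eta>) + \<eta> / 2 * EGV2 f T"
      using diameter \<open>\<eta> > 0\<close> by (intro add_right_mono divide_right_mono) auto
    also have "\<dots> = 3 / 4 * sqrt (2 * EGV2 f T)" by (rule tuned_step_size[OF assms(5,6)])
    finally show ?thesis using real_sqrt_ge_zero[of "2 * EGV2 f T"] assms(5) by linarith
  qed
  have "(\<Sum>t=1..T. inner (f t) (x t)) - sqrt (2 * EGV2 f T) \<le> (INF u\<in>W. \<Sum>t=1..T. inner (f t) u)"
    using assms(3) by (intro cINF_greatest) (auto dest: regret_u)
  thus ?thesis by simp
qed

end
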